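(* Let $\omega_1,\dots,\omega_4$ be a basis of $(\mathbb C^4)^\ast$ and set $\Omega_1=\omega_1\wedge\omega_2$, $\Omega_2=\omega_1\wedge\omega_3$, $\Omega_3=\omega_1\wedge\omega_4$, $\Omega_4=\omega_2\wedge\omega_3$, $\Omega_5=-\omega_2\wedge\omega_4$, $\Omega_6=\omega_3\wedge\omega_4$. For $a\in\mathbb C$ the $(2,2)$-form $$\alpha_a=\sum_{j=1}^6\Omega_j\wedge\bar\Omega_j+a\,\Omega_1\wedge\bar\Omega_6+\bar a\,\Omega_6\wedge\bar\Omega_1$$ is positive if and only if $|a|\leq 2$.
   Context: Forms are constant-coefficient forms on $\mathbb C^n$. A $(p,p)$-form $\alpha$ in $\mathbb C^n$ is called positive if for all $(1,0)$-forms $\gamma_1,\dots,\gamma_{n-p}\in(\mathbb C^n)^\ast$ one has $\alpha\wedge i\gamma_1\wedge\bar\gamma_1\wedge\dots\wedge i\gamma_{n-p}\wedge\bar\gamma_{n-p}\geq 0$, meaning this $(n,n)$-form is a nonnegative real multiple of the standard volume form $idz_1\wedge d\bar z_1\wedge\dots\wedge idz_n\wedge d\bar z_n$. *)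

theory Defs
  imports Complex_Main
begin

text \<open>Constant-coefficient differential forms on C^n, represented in the exterior
algebra generated by the 2n symbols dz_0,...,dz_(n-1) (encoded as the naturals 0..n-1)
and dzbar_0,...,dzbar_(n-1) (encoded as n..2n-1).  A form is given by its coefficient
function on finite sets S of generators: the basis element e_S is the wedge product of
the generators in S in increasing order.\<close>

type_synonym form = "nat set \<Rightarrow> complex"

definition inv_count :: "nat set \<Rightarrow> nat set \<Rightarrow> nat" where
  "inv_count A B = card {(a, b). a \<in> A \<and> b \<in> B \<and> b < a}"

definition wedge :: "form \<Rightarrow> form \<Rightarrow> form" where
  "wedge \<alpha> \<beta> = (\<lambda>S. if finite S then
      (\<Sum>A\<in>Pow S. (-1) ^ inv_count A (S - A) * \<alpha> A * \<beta> (S - A)) else 0)"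

definition fadd :: "form \<Rightarrow> form \<Rightarrow> form" where
  "fadd \<alpha> \<beta> = (\<lambda>S. \<alpha> S + \<beta> S)"

definition fscale :: "complex \<Rightarrow> form \<Rightarrow> form" where
  "fscale c \<alpha> = (\<lambda>S. c * \<alpha> S)"

definition unit_form :: form where
  "unit_form = (\<lambda>S. if S = {} then 1 else 0)"

text \<open>The (1,0)-form sum_k c_k dz_k, and its complex conjugate sum_k conj(c_k) dzbar_k.\<close>
definition form10 :: "nat \<Rightarrow> (nat \<Rightarrow> complex) \<Rightarrow> form" where
  "form10 n c = (\<lambda>S. if card S = 1 \<and> the_elem S < n then c (the_elem S) else 0)"

definition form01 :: "nat \<Rightarrow> (nat \<Rightarrow> complex) \<Rightarrow> form" where
  "form01 n c = (\<lambda>S. if card S = 1 \<and> n \<le> the_elem S \<and> the_elem S < 2 * n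
                     then cnj (c (the_elem S - n)) else 0)"

definition dz :: "nat \<Rightarrow> nat \<Rightarrow> form" where
  "dz n k = form10 n (\<lambda>j. if j = k then 1 else 0)"

definition dzb :: "nat \<Rightarrow> nat \<Rightarrow> form" where
  "dzb n k = form01 n (\<lambda>j. if j = k then 1 else 0)"

definition vol :: "nat \<Rightarrow> form" where
  "vol n = foldr (\<lambda>k acc. wedge (fscale \<i> (wedge (dz n k) (dzb n k))) acc) [0..<n] unit_form"

definition test_form :: "nat \<Rightarrow> (nat \<Rightarrow> complex) list \<Rightarrow> form" where
  "test_form n gs = foldr (\<lambda>c acc. wedge (fscale \<i> (wedge (form10 n c) (form01 n c))) acc) gs unit_form"

definition positive_form :: "nat \<Rightarrow> nat \<Rightarrow> form \<Rightarrow> bool" where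
  "positive_form n p \<alpha> \<longleftrightarrow>
     (\<forall>gs. length gs = n - p \<longrightarrow>
        (\<exists>r::real. r \<ge> 0 \<and> wedge \<alpha> (test_form n gs) = fscale (complex_of_real r) (vol n)))"

text \<open>omega_0..omega_3 given by coefficient rows w j (omega_j = sum_k w j k dz_k).
  Omega / OmegaB j for j = 1..6 as in the paper (with omega indices shifted by one).\<close>
definition Omega :: "(nat \<Rightarrow> nat \<Rightarrow> complex) \<Rightarrow> nat \<Rightarrow> form" where
  "Omega w j = (let om = (\<lambda>i. form10 4 (w i)) in
     if j = 1 then wedge (om 0) (om 1)
     else if j = 2 then wedge (om 0) (om 2)
     else if j = 3 then wedge (om 0) (om 3)
     else if j = 4 then wedge (om 1) (om 2)
     else if j = 5 then fscale (-1) (wedge (om 1) (om 3))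
     else wedge (om 2) (om 3))"

definition OmegaB :: "(nat \<Rightarrow> nat \<Rightarrow> complex) \<Rightarrow> nat \<Rightarrow> form" where
  "OmegaB w j = (let om = (\<lambda>i. form01 4 (w i)) in
     if j = 1 then wedge (om 0) (om 1)
     else if j = 2 then wedge (om 0) (om 2)
     else if j = 3 then wedge (om 0) (om 3)
     else if j = 4 then wedge (om 1) (om 2)
     else if j = 5 then fscale (-1) (wedge (om 1) (om 3))
     else wedge (om 2) (om 3))"

definition alpha_form :: "(nat \<Rightarrow> nat \<Rightarrow> complex) \<Rightarrow> complex \<Rightarrow> form" where
  "alpha_form w a =
     fadd (fadd (foldr (\<lambda>j acc. fadd (wedge (Omega w j) (OmegaB w j)) acc) [1..<7] (\<lambda>_. 0))
                (fscale a (wedge (Omega w 1) (OmegaB w 6))))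
          (fscale (cnj a) (wedge (Omega w 6) (OmegaB w 1)))"

end

theory Submission
  imports Defs
begin

text \<open>For (1,0)-forms \<open>\<gamma>\<^sub>1, \<gamma>\<^sub>2\<close> let \<open>c\<^sub>j\<close> be the coefficient of \<open>\<Omega>\<^sub>j \<and> \<gamma>\<^sub>1 \<and> \<gamma>\<^sub>2\<close>
  with respect to \<open>dz\<^sub>1 \<and> \<dots> \<and> dz\<^sub>4\<close>, a signed \<open>4\<times>4\<close> determinant.  Then
  \<open>\<alpha>\<^sub>a \<and> i\<gamma>\<^sub>1 \<and> conj \<gamma>\<^sub>1 \<and> i\<gamma>\<^sub>2 \<and> conj \<gamma>\<^sub>2\<close> is \<open>\<Sum>|c\<^sub>j|\<^sup>2 + 2 Re(a c\<^sub>1 conj c\<^sub>6)\<close> times the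
  volume form, and the \<open>c\<^sub>j\<close> satisfy the Pluecker relation \<open>c\<^sub>1c\<^sub>6 + c\<^sub>2c\<^sub>5 + c\<^sub>3c\<^sub>4 = 0\<close>
  (this is what the sign of \<open>\<Omega>\<^sub>5\<close> is for).  Hence
  \<open>2|c\<^sub>1c\<^sub>6| \<le> 2|c\<^sub>2c\<^sub>5| + 2|c\<^sub>3c\<^sub>4| \<le> |c\<^sub>2|\<^sup>2 + \<dots> + |c\<^sub>5|\<^sup>2\<close>, which together with
  \<open>2|c\<^sub>1c\<^sub>6| \<le> |c\<^sub>1|\<^sup>2 + |c\<^sub>6|\<^sup>2\<close> gives positivity for \<open>|a| \<le> 2\<close>.  Conversely, for
  \<open>\<gamma>\<^sub>1 = \<omega>\<^sub>1 + \<omega>\<^sub>3\<close> and \<open>\<gamma>\<^sub>2 = \<omega>\<^sub>2 + u\<omega>\<^sub>4\<close> with \<open>|u| = 1\<close>, \<open>au = -|a|\<close>, the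
  coefficient is \<open>(4 - 2|a|) |det(\<omega>\<^sub>1,\<dots>,\<omega>\<^sub>4)|\<^sup>2\<close>, negative for \<open>|a| > 2\<close>.\<close>

lemma inv_count_eq_sum:
  "finite A \<Longrightarrow> finite B \<Longrightarrow> inv_count A B = (\<Sum>a\<in>A. \<Sum>b\<in>B. if b < a then 1 else 0)"
proof -
  assume fin: "finite A" "finite B"
  have "{(a, b). a \<in> A \<and> b \<in> B \<and> b < a} = Sigma A (\<lambda>a. {b\<in>B. b < a})" by auto
  hence "inv_count A B = (\<Sum>a\<in>A. card {b\<in>B. b < a})"
    unfolding inv_count_def using fin by (simp add: card_SigmaI)
  also have "\<dots> = (\<Sum>a\<in>A. \<Sum>b\<in>B. if b < a then 1 else 0)"
    using fin by (simp add: sum.If_cases) (intro sum.cong refl arg_cong[where f=card]; auto)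
  finally show ?thesis .
qed

lemma inv_count_Un_left:
  "finite A \<Longrightarrow> finite B \<Longrightarrow> finite C \<Longrightarrow> A \<inter> B = {} \<Longrightarrow>
   inv_count (A \<union> B) C = inv_count A C + inv_count B C"
  by (simp add: inv_count_eq_sum sum.union_disjoint)

lemma inv_count_Un_right:
  "finite A \<Longrightarrow> finite B \<Longrightarrow> finite C \<Longrightarrow> B \<inter> C = {} \<Longrightarrow>
   inv_count A (B \<union> C) = inv_count A B + inv_count A C"
  by (simp add: inv_count_eq_sum sum.union_disjoint sum.distrib)

lemma inv_count_swap:
  assumes "finite A" "finite B" "A \<inter> B = {}"
  shows "inv_count A B + inv_count B A = card A * card B"
proof -
  have "inv_count B A = (\<Sum>a\<in>A. \<Sum>b\<in>B. if a < b then 1 else 0)"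
    using assms by (simp add: inv_count_eq_sum) (rule sum.swap)
  hence "inv_count A B + inv_count B A
      = (\<Sum>a\<in>A. \<Sum>b\<in>B. (if b < a then 1 else 0) + (if a < b then 1 else 0))"
    using assms by (simp add: inv_count_eq_sum sum.distrib)
  also have "\<dots> = (\<Sum>a\<in>A. \<Sum>b\<in>B. 1)"
    using assms(3) by (intro sum.cong refl) auto
  finally show ?thesis by simp
qed

lemma minus_one_power_diff:
  assumes "x + y = n"
  shows "(-1::'a::comm_ring_1) ^ x = (-1) ^ n * (-1) ^ y"
  unfolding assms[symmetric] by (simp add: power_add mult.assoc)

section \<open>The exterior algebra\<close>

lemma wedge_infinite: "infinite S \<Longrightarrow> wedge \<alpha> \<beta> S = 0"
  by (simp add: wedge_def)

lemma wedge_fadd_left: "wedge (fadd \<alpha> \<beta>) \<gamma> = fadd (wedge \<alpha> \<gamma>) (wedge \<beta> \<gamma>)"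
  unfolding wedge_def fadd_def by (rule ext) (simp add: algebra_simps sum.distrib)

lemma wedge_fscale_left: "wedge (fscale c \<alpha>) \<beta> = fscale c (wedge \<alpha> \<beta>)"
  unfolding wedge_def fscale_def by (rule ext) (simp add: algebra_simps sum_distrib_left)

lemma wedge_fscale_right: "wedge \<alpha> (fscale c \<beta>) = fscale c (wedge \<alpha> \<beta>)"
  unfolding wedge_def fscale_def by (rule ext) (simp add: algebra_simps sum_distrib_left)

lemma wedge_zero_left: "wedge (\<lambda>_. 0) \<beta> = (\<lambda>_. 0)"
  unfolding wedge_def by (rule ext) simp

lemma fscale_fscale: "fscale c (fscale d \<alpha>) = fscale (c * d) \<alpha>"
  unfolding fscale_def by (rule ext) simp

lemma fscale_1: "fscale 1 \<alpha> = \<alpha>"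
  unfolding fscale_def by (rule ext) simp

lemma wedge_unit_form_right:
  assumes "\<And>S. infinite S \<Longrightarrow> \<alpha> S = 0"
  shows "wedge \<alpha> unit_form = \<alpha>"
proof
  fix S
  show "wedge \<alpha> unit_form S = \<alpha> S"
  proof (cases "finite S")
    case True
    have "(\<Sum>A\<in>Pow S. (-1) ^ inv_count A (S - A) * \<alpha> A * (if S - A = {} then 1 else 0))
        = (\<Sum>A\<in>Pow S. if A = S then (-1) ^ inv_count A (S - A) * \<alpha> A else 0)"
      by (rule sum.cong) auto
    then have "wedge \<alpha> unit_form S
        = (\<Sum>A\<in>Pow S. if A = S then (-1) ^ inv_count A (S - A) * \<alpha> A else 0)"
      unfolding wedge_def unit_form_def using True by simp
    also have "\<dots> = (-1) ^ inv_count S {} * \<alpha> S"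
      using True by (simp add: sum.delta')
    finally show ?thesis by (simp add: inv_count_def)
  qed (simp add: assms wedge_infinite)
qed

lemma wedge_assoc: "wedge (wedge \<alpha> \<beta>) \<gamma> = wedge \<alpha> (wedge \<beta> \<gamma>)"
proof
  fix S
  show "wedge (wedge \<alpha> \<beta>) \<gamma> S = wedge \<alpha> (wedge \<beta> \<gamma>) S"
  proof (cases "finite S")
    case fin: True
    define T1 where "T1 = (\<lambda>(A, B). (-1::complex) ^ inv_count A (S - A) * (-1) ^ inv_count B (A - B)
       * \<alpha> B * \<beta> (A - B) * \<gamma> (S - A))"
    define T2 where "T2 = (\<lambda>(B, C). (-1::complex) ^ inv_count B (S - B) * (-1) ^ inv_count C (S - B - C)
       * \<alpha> B * \<beta> C * \<gamma> (S - B - C))"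
    have "wedge (wedge \<alpha> \<beta>) \<gamma> S = (\<Sum>A\<in>Pow S. \<Sum>B\<in>Pow A. T1 (A, B))"
      unfolding wedge_def T1_def using fin
      by (auto simp: sum_distrib_left sum_distrib_right algebra_simps intro!: sum.cong
          dest: finite_subset)
    also have "\<dots> = sum T1 (SIGMA A:Pow S. Pow A)"
      using fin by (subst sum.Sigma) (auto intro: finite_subset)
    also have "\<dots> = sum T2 (SIGMA B:Pow S. Pow (S - B))"
    proof (rule sum.reindex_bij_witness[where i="\<lambda>(B, C). (B \<union> C, B)" and j="\<lambda>(A, B). (B, A - B)"])
      fix p assume "p \<in> (SIGMA A:Pow S. Pow A)"
      then obtain A B where p: "p = (A, B)" "A \<subseteq> S" "B \<subseteq> A" by auto
      then show "(case case p of (A, B) \<Rightarrow> (B, A - B) of (B, C) \<Rightarrow> (B \<union> C, B)) = p"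
        and "(case p of (A, B) \<Rightarrow> (B, A - B)) \<in> (SIGMA B:Pow S. Pow (S - B))"
        by auto
      have fins: "finite A" "finite B" "finite (A - B)" "finite (S - A)"
        using p fin by (auto intro: finite_subset)
      have "A = B \<union> (A - B)" using p by auto
      then have "inv_count A (S - A) = inv_count (B \<union> (A - B)) (S - A)" by simp
      also have "\<dots> = inv_count B (S - A) + inv_count (A - B) (S - A)"
        by (rule inv_count_Un_left) (use fins in auto)
      finally have split_A: "inv_count A (S - A) = inv_count B (S - A) + inv_count (A - B) (S - A)" .
      have "S - B = (A - B) \<union> (S - A)" using p by auto
      then have "inv_count B (S - B) = inv_count B ((A - B) \<union> (S - A))" by simp
      also have "\<dots> = inv_count B (A - B) + inv_count B (S - A)"
        by (rule inv_count_Un_right) (use fins in auto)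
      finally have split_SB: "inv_count B (S - B) = inv_count B (A - B) + inv_count B (S - A)" .
      have "(-1::complex) ^ inv_count A (S - A) * (-1) ^ inv_count B (A - B)
          = (-1) ^ inv_count B (S - B) * (-1) ^ inv_count (A - B) (S - A)"
        unfolding split_A split_SB power_add by (simp add: algebra_simps)
      moreover have "S - B - (A - B) = S - A" using p by auto
      ultimately show "T2 (case p of (A, B) \<Rightarrow> (B, A - B)) = T1 p"
        unfolding T1_def T2_def p(1) by (simp add: algebra_simps)
    next
      fix q assume "q \<in> (SIGMA B:Pow S. Pow (S - B))"
      then obtain B C where "q = (B, C)" "B \<subseteq> S" "C \<subseteq> S - B" by auto
      then show "(case case q of (B, C) \<Rightarrow> (B \<union> C, B) of (A, B) \<Rightarrow> (B, A - B)) = q"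
        and "(case q of (B, C) \<Rightarrow> (B \<union> C, B)) \<in> (SIGMA A:Pow S. Pow A)"
        by auto
    qed
    also have "\<dots> = (\<Sum>B\<in>Pow S. \<Sum>C\<in>Pow (S - B). T2 (B, C))"
      using fin by (subst sum.Sigma) (auto intro: finite_subset)
    also have "\<dots> = wedge \<alpha> (wedge \<beta> \<gamma>) S"
      unfolding wedge_def T2_def using fin
      by (auto simp: sum_distrib_left sum_distrib_right algebra_simps intro!: sum.cong
          dest: finite_subset)
    finally show ?thesis .
  qed (simp add: wedge_infinite)
qed

definition homogeneous :: "nat set \<Rightarrow> nat \<Rightarrow> form \<Rightarrow> bool" where
  "homogeneous X k \<phi> \<longleftrightarrow> (\<forall>S. \<phi> S \<noteq> 0 \<longrightarrow> finite S \<and> S \<subseteq> X \<and> card S = k)"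

lemma homogeneous_wedge:
  assumes "homogeneous X k \<alpha>" "homogeneous X l \<beta>" "n = k + l"
  shows "homogeneous X n (wedge \<alpha> \<beta>)"
  unfolding homogeneous_def
proof (intro allI impI)
  fix S assume nz: "wedge \<alpha> \<beta> S \<noteq> 0"
  hence fin: "finite S" by (metis wedge_infinite)
  with nz have "(\<Sum>A\<in>Pow S. (-1) ^ inv_count A (S - A) * \<alpha> A * \<beta> (S - A)) \<noteq> 0"
    by (simp add: wedge_def)
  then obtain A where A: "A \<in> Pow S" "(-1) ^ inv_count A (S - A) * \<alpha> A * \<beta> (S - A) \<noteq> 0"
    by (rule sum.not_neutral_contains_not_neutral)
  hence "A \<subseteq> X" "card A = k" "S - A \<subseteq> X" "card (S - A) = l"
    using assms(1,2) unfolding homogeneous_def by auto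
  moreover have "card S = card A + card (S - A)"
    using A(1) fin by (simp add: card_Diff_subset finite_subset card_mono)
  ultimately show "finite S \<and> S \<subseteq> X \<and> card S = n" using fin A(1) assms(3) by auto
qed

lemma homogeneous_mono: "homogeneous X k \<phi> \<Longrightarrow> X \<subseteq> Y \<Longrightarrow> homogeneous Y k \<phi>"
  unfolding homogeneous_def by blast

lemma homogeneous_fscale: "homogeneous X k \<phi> \<Longrightarrow> homogeneous X k (fscale c \<phi>)"
  unfolding homogeneous_def fscale_def by auto

lemma homogeneous_fadd: "homogeneous X k \<phi> \<Longrightarrow> homogeneous X k \<psi> \<Longrightarrow> homogeneous X k (fadd \<phi> \<psi>)"
  unfolding homogeneous_def fadd_def by (metis add_0 add.right_neutral)

lemma homogeneous_zero: "homogeneous X k (\<lambda>_. 0)"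
  unfolding homogeneous_def by auto

lemma homogeneous_form10: "homogeneous {..<n} 1 (form10 n c)"
  unfolding homogeneous_def form10_def by (auto simp: card_Suc_eq)

lemma homogeneous_form01: "homogeneous {n..<2 * n} 1 (form01 n c)"
  unfolding homogeneous_def form01_def by (auto simp: card_Suc_eq)

lemma homogeneous_top_degree:
  "homogeneous X k \<phi> \<Longrightarrow> finite X \<Longrightarrow> card X = k \<Longrightarrow> \<phi> S \<noteq> 0 \<Longrightarrow> S = X"
  unfolding homogeneous_def by (metis card_subset_eq)

lemma wedge_commute:
  assumes "homogeneous UNIV k \<alpha>" "homogeneous UNIV l \<beta>"
  shows "wedge \<alpha> \<beta> = fscale ((-1) ^ (k * l)) (wedge \<beta> \<alpha>)"
proof
  fix S
  show "wedge \<alpha> \<beta> S = fscale ((-1) ^ (k * l)) (wedge \<beta> \<alpha>) S"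
  proof (cases "finite S")
    case fin: True
    have bij: "bij_betw (\<lambda>B. S - B) (Pow S) (Pow S)"
      by (rule bij_betw_byWitness[where f'="\<lambda>B. S - B"]) auto
    have "wedge \<alpha> \<beta> S = (\<Sum>A\<in>Pow S. (-1) ^ inv_count A (S - A) * \<alpha> A * \<beta> (S - A))"
      using fin by (simp add: wedge_def)
    also have "\<dots> = (\<Sum>B\<in>Pow S. (-1) ^ inv_count (S - B) (S - (S - B)) * \<alpha> (S - B) * \<beta> (S - (S - B)))"
      by (rule sum.reindex_bij_betw[OF bij, symmetric])
    also have "\<dots> = (\<Sum>B\<in>Pow S. (-1) ^ (k * l) * ((-1) ^ inv_count B (S - B) * \<beta> B * \<alpha> (S - B)))"
    proof (rule sum.cong[OF refl])
      fix B assume B: "B \<in> Pow S"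
      hence compl: "S - (S - B) = B" by auto
      show "(-1) ^ inv_count (S - B) (S - (S - B)) * \<alpha> (S - B) * \<beta> (S - (S - B)) =
            (-1) ^ (k * l) * ((-1) ^ inv_count B (S - B) * \<beta> B * \<alpha> (S - B))"
      proof (cases "\<alpha> (S - B) = 0 \<or> \<beta> B = 0")
        case False
        hence "card (S - B) = k" "card B = l" using assms unfolding homogeneous_def by auto
        moreover have "inv_count (S - B) B + inv_count B (S - B) = card (S - B) * card B"
          using B fin by (intro inv_count_swap) (auto intro: finite_subset)
        ultimately have "(-1::complex) ^ inv_count (S - B) B
            = (-1) ^ (k * l) * (-1) ^ inv_count B (S - B)"
          by (intro minus_one_power_diff) simp
        thus ?thesis using compl by simp
      qed (use compl in auto)
    qed
    also have "\<dots> = fscale ((-1) ^ (k * l)) (wedge \<beta> \<alpha>) S"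
      using fin by (simp add: wedge_def fscale_def sum_distrib_left)
    finally show ?thesis .
  qed (simp add: wedge_infinite fscale_def)
qed

lemma wedge_exchange_middle:
  assumes "homogeneous UNIV 2 \<beta>" "homogeneous UNIV 2 \<gamma>"
  shows "wedge (wedge \<alpha> \<beta>) (wedge \<gamma> \<delta>) = wedge (wedge \<alpha> \<gamma>) (wedge \<beta> \<delta>)"
proof -
  have "wedge \<beta> \<gamma> = wedge \<gamma> \<beta>" using wedge_commute[OF assms] by (simp add: fscale_1)
  then show ?thesis by (metis wedge_assoc)
qed

definition monomial_at :: "nat set \<Rightarrow> form \<Rightarrow> bool" where
  "monomial_at A \<phi> \<longleftrightarrow> (\<forall>S. \<phi> S \<noteq> 0 \<longrightarrow> S = A)"

lemma homogeneous_top_degree_monomial_at: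
  "homogeneous X k \<phi> \<Longrightarrow> finite X \<Longrightarrow> card X = k \<Longrightarrow> monomial_at X \<phi>"
  unfolding monomial_at_def using homogeneous_top_degree by blast

lemma monomial_at_wedge:
  assumes "monomial_at A \<alpha>" "monomial_at B \<beta>"
  shows "monomial_at (A \<union> B) (wedge \<alpha> \<beta>)"
  unfolding monomial_at_def
proof (intro allI impI)
  fix S assume nz: "wedge \<alpha> \<beta> S \<noteq> 0"
  hence "finite S" by (metis wedge_infinite)
  with nz have "(\<Sum>C\<in>Pow S. (-1) ^ inv_count C (S - C) * \<alpha> C * \<beta> (S - C)) \<noteq> 0"
    by (simp add: wedge_def)
  then obtain C where C: "C \<in> Pow S" "(-1) ^ inv_count C (S - C) * \<alpha> C * \<beta> (S - C) \<noteq> 0"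
    by (rule sum.not_neutral_contains_not_neutral)
  hence "C = A" "S - C = B" using assms unfolding monomial_at_def by auto
  thus "S = A \<union> B" using C(1) by auto
qed

lemma wedge_monomial_at_value:
  assumes "monomial_at A \<alpha>" "monomial_at B \<beta>" "finite A" "finite B" "A \<inter> B = {}"
  shows "wedge \<alpha> \<beta> (A \<union> B) = (-1) ^ inv_count A B * \<alpha> A * \<beta> B"
proof -
  have "wedge \<alpha> \<beta> (A \<union> B)
      = (\<Sum>C\<in>Pow (A \<union> B). (-1) ^ inv_count C (A \<union> B - C) * \<alpha> C * \<beta> (A \<union> B - C))"
    using assms by (simp add: wedge_def)
  also have "\<dots> = (\<Sum>C\<in>Pow (A \<union> B).
      if C = A then (-1) ^ inv_count C (A \<union> B - C) * \<alpha> C * \<beta> (A \<union> B - C) else 0)"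
    using assms(1,2) unfolding monomial_at_def by (intro sum.cong) auto
  also have "\<dots> = (-1) ^ inv_count A (A \<union> B - A) * \<alpha> A * \<beta> (A \<union> B - A)"
    using assms by (simp add: sum.delta')
  also have "A \<union> B - A = B" using assms(5) by auto
  finally show ?thesis .
qed

lemma wedge_degree_one_pair:
  assumes "homogeneous UNIV 1 \<alpha>" "homogeneous UNIV 1 \<beta>" "x < y"
  shows "wedge \<alpha> \<beta> {x, y} = \<alpha> {x} * \<beta> {y} - \<alpha> {y} * \<beta> {x}"
proof -
  let ?g = "\<lambda>A. (-1) ^ inv_count A ({x, y} - A) * \<alpha> A * \<beta> ({x, y} - A)"
  have "wedge \<alpha> \<beta> {x, y} = sum ?g (Pow {x, y})" by (simp add: wedge_def)
  also have "\<dots> = sum ?g {{x}, {y}}"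
  proof (rule sum.mono_neutral_right)
    show "\<forall>A\<in>Pow {x, y} - {{x}, {y}}. ?g A = 0"
    proof
      fix A assume "A \<in> Pow {x, y} - {{x}, {y}}"
      hence "A = {} \<or> A = {x, y}" by blast
      thus "?g A = 0" using assms(1,2) unfolding homogeneous_def by auto
    qed
  qed auto
  also have "\<dots> = \<alpha> {x} * \<beta> {y} - \<alpha> {y} * \<beta> {x}"
    using assms(3) by (simp add: inv_count_eq_sum insert_Diff_if)
  finally show ?thesis .
qed

lemma wedge_degree_two_quadruple:
  assumes "homogeneous UNIV 2 P" "homogeneous UNIV 2 Q" "a < b" "b < c" "c < d"
  shows "wedge P Q {a, b, c, d} = P {a, b} * Q {c, d} - P {a, c} * Q {b, d} + P {a, d} * Q {b, c}
     + P {b, c} * Q {a, d} - P {b, d} * Q {a, c} + P {c, d} * Q {a, b}"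
proof -
  let ?S = "{a, b, c, d}"
  let ?g = "\<lambda>A. (-1) ^ inv_count A (?S - A) * P A * Q (?S - A)"
  let ?pairs = "{{a, b}, {a, c}, {a, d}, {b, c}, {b, d}, {c, d}}"
  have "wedge P Q ?S = sum ?g (Pow ?S)" by (simp add: wedge_def)
  also have "\<dots> = sum ?g ?pairs"
  proof (rule sum.mono_neutral_right)
    show "\<forall>A\<in>Pow ?S - ?pairs. ?g A = 0"
    proof
      fix A assume A: "A \<in> Pow ?S - ?pairs"
      show "?g A = 0"
      proof (cases "P A = 0")
        case False
        hence "card A = 2" using assms(1) unfolding homogeneous_def by auto
        then obtain x y where "x \<noteq> y" "A = {x, y}" by (auto simp: card_2_iff)
        thus ?thesis using A by auto
      qed simp
    qed
  qed auto
  also have "\<dots> = ?g {a, b} + ?g {a, c} + ?g {a, d} + ?g {b, c} + ?g {b, d} + ?g {c, d}"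
    using assms(3-5) by (simp add: doubleton_eq_iff algebra_simps)
  also have "?S - {a, b} = {c, d}" "?S - {a, c} = {b, d}" "?S - {a, d} = {b, c}"
     "?S - {b, c} = {a, d}" "?S - {b, d} = {a, c}" "?S - {c, d} = {a, b}"
    using assms(3-5) by auto
  moreover have "\<not> b < a" "\<not> c < a" "\<not> d < a" "\<not> c < b" "\<not> d < b" "\<not> d < c"
     "a < c" "a < d" "b < d" "a \<noteq> b" "a \<noteq> c" "a \<noteq> d" "b \<noteq> c" "b \<noteq> d" "c \<noteq> d"
    using assms(3-5) by auto
  ultimately show ?thesis by (simp add: inv_count_eq_sum algebra_simps)
qed

lemma homogeneous_UNIV_form10: "homogeneous UNIV 1 (form10 n c)"
  by (rule homogeneous_mono[OF homogeneous_form10]) simp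

lemma homogeneous_UNIV_form01: "homogeneous UNIV 1 (form01 n c)"
  by (rule homogeneous_mono[OF homogeneous_form01]) simp

lemma homogeneous_UNIV_wedge_form10: "homogeneous UNIV 2 (wedge (form10 n u) (form10 n v))"
  by (rule homogeneous_wedge[OF homogeneous_UNIV_form10 homogeneous_UNIV_form10]) simp

lemma homogeneous_UNIV_wedge_form01: "homogeneous UNIV 2 (wedge (form01 n u) (form01 n v))"
  by (rule homogeneous_wedge[OF homogeneous_UNIV_form01 homogeneous_UNIV_form01]) simp

lemma form10_singleton: "x < n \<Longrightarrow> form10 n u {x} = u x"
  by (simp add: form10_def)

lemma form01_singleton: "n \<le> x \<Longrightarrow> x < 2 * n \<Longrightarrow> form01 n u {x} = cnj (u (x - n))"
  by (simp add: form01_def)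

definition minor2 :: "(nat \<Rightarrow> complex) \<Rightarrow> (nat \<Rightarrow> complex) \<Rightarrow> nat \<Rightarrow> nat \<Rightarrow> complex" where
  "minor2 u v p q = u p * v q - u q * v p"

lemma wedge_form10_pair:
  "x < y \<Longrightarrow> y < n \<Longrightarrow> wedge (form10 n u) (form10 n v) {x, y} = minor2 u v x y"
  by (simp add: wedge_degree_one_pair[OF homogeneous_UNIV_form10 homogeneous_UNIV_form10]
      form10_singleton minor2_def)

lemma wedge_form01_pair:
  "x < y \<Longrightarrow> n \<le> x \<Longrightarrow> y < 2 * n \<Longrightarrow>
   wedge (form01 n u) (form01 n v) {x, y} = cnj (minor2 u v (x - n) (y - n))"
  by (simp add: wedge_degree_one_pair[OF homogeneous_UNIV_form01 homogeneous_UNIV_form01]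
      form01_singleton minor2_def)

lemma test_form_two:
  "test_form n [g1, g2]
   = wedge (wedge (form10 n g1) (form10 n g2)) (wedge (form01 n g1) (form01 n g2))"
proof -
  let ?G1 = "form10 n g1" and ?G2 = "form10 n g2" and ?H1 = "form01 n g1" and ?H2 = "form01 n g2"
  have unit: "wedge (fscale \<i> (wedge ?G2 ?H2)) unit_form = fscale \<i> (wedge ?G2 ?H2)"
    by (rule wedge_unit_form_right) (simp add: fscale_def wedge_infinite)
  have unit': "wedge ?H2 unit_form = ?H2"
    by (rule wedge_unit_form_right) (simp add: form01_def)
  have swap: "wedge ?H1 ?G2 = fscale (-1) (wedge ?G2 ?H1)"
    using wedge_commute[OF homogeneous_UNIV_form01 homogeneous_UNIV_form10, of n g1 n g2] by simp
  have "test_form n [g1, g2] = fscale (\<i> * \<i>) (wedge ?G1 (wedge (wedge ?H1 ?G2) ?H2))"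
    by (simp add: test_form_def unit unit' wedge_fscale_left wedge_fscale_right fscale_fscale wedge_assoc)
  also have "\<dots> = wedge (wedge ?G1 ?G2) (wedge ?H1 ?H2)"
    by (simp add: swap wedge_fscale_left wedge_fscale_right fscale_fscale fscale_1 wedge_assoc)
  finally show ?thesis .
qed

section \<open>Top-degree forms on \<open>\<complex>\<^sup>4\<close>\<close>

text \<open>\<open>det4 u v x y\<close> is the determinant with rows \<open>u, v, x, y\<close>, written as its Laplace
  expansion along the first two rows.\<close>

definition det4 ::
  "(nat \<Rightarrow> complex) \<Rightarrow> (nat \<Rightarrow> complex) \<Rightarrow> (nat \<Rightarrow> complex) \<Rightarrow> (nat \<Rightarrow> complex) \<Rightarrow> complex" where
  "det4 u v x y = minor2 u v 0 1 * minor2 x y 2 3 - minor2 u v 0 2 * minor2 x y 1 3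
     + minor2 u v 0 3 * minor2 x y 1 2 + minor2 u v 1 2 * minor2 x y 0 3
     - minor2 u v 1 3 * minor2 x y 0 2 + minor2 u v 2 3 * minor2 x y 0 1"

lemma wedge_form10_top:
  "wedge (wedge (form10 4 u) (form10 4 v)) (wedge (form10 4 x) (form10 4 y)) {0, 1, 2, 3}
   = det4 u v x y"
  by (simp add: wedge_degree_two_quadruple[OF homogeneous_UNIV_wedge_form10
      homogeneous_UNIV_wedge_form10] wedge_form10_pair det4_def)

lemma wedge_form01_top:
  "wedge (wedge (form01 4 u) (form01 4 v)) (wedge (form01 4 x) (form01 4 y)) {4, 5, 6, 7}
   = cnj (det4 u v x y)"
  by (simp add: wedge_degree_two_quadruple[OF homogeneous_UNIV_wedge_form01
      homogeneous_UNIV_wedge_form01] wedge_form01_pair det4_def)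

lemma monomial_at_wedge_form10_top:
  "monomial_at {0, 1, 2, 3} (wedge (wedge (form10 4 u) (form10 4 v)) (wedge (form10 4 x) (form10 4 y)))"
proof (rule homogeneous_top_degree_monomial_at)
  have "homogeneous {..<4} 4
      (wedge (wedge (form10 4 u) (form10 4 v)) (wedge (form10 4 x) (form10 4 y)))"
    by (intro homogeneous_wedge[where k=2 and l=2] homogeneous_wedge[where k=1 and l=1]
        homogeneous_form10) auto
  moreover have "{..<4} = {0, 1, 2, 3::nat}" by auto
  ultimately show "homogeneous {0, 1, 2, 3} 4
      (wedge (wedge (form10 4 u) (form10 4 v)) (wedge (form10 4 x) (form10 4 y)))" by simp
qed auto

lemma monomial_at_wedge_form01_top:
  "monomial_at {4, 5, 6, 7} (wedge (wedge (form01 4 u) (form01 4 v)) (wedge (form01 4 x) (form01 4 y)))"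
proof (rule homogeneous_top_degree_monomial_at)
  have "homogeneous {4..<2 * 4} 4
      (wedge (wedge (form01 4 u) (form01 4 v)) (wedge (form01 4 x) (form01 4 y)))"
    by (intro homogeneous_wedge[where k=2 and l=2] homogeneous_wedge[where k=1 and l=1]
        homogeneous_form01) auto
  moreover have "{4..<2 * 4} = {4, 5, 6, 7::nat}" by auto
  ultimately show "homogeneous {4, 5, 6, 7} 4
      (wedge (wedge (form01 4 u) (form01 4 v)) (wedge (form01 4 x) (form01 4 y)))" by simp
qed auto

lemma wedge_decomposable_test_form_top:
  "wedge (wedge (wedge (form10 4 u) (form10 4 v)) (wedge (form01 4 u') (form01 4 v')))
     (test_form 4 [g1, g2]) {..<8} = det4 u v g1 g2 * cnj (det4 u' v' g1 g2)"
proof -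
  let ?X = "wedge (wedge (form10 4 u) (form10 4 v)) (wedge (form10 4 g1) (form10 4 g2))"
  let ?Y = "wedge (wedge (form01 4 u') (form01 4 v')) (wedge (form01 4 g1) (form01 4 g2))"
  have "wedge (wedge (wedge (form10 4 u) (form10 4 v)) (wedge (form01 4 u') (form01 4 v')))
     (test_form 4 [g1, g2]) = wedge ?X ?Y"
    unfolding test_form_two
    by (rule wedge_exchange_middle[OF homogeneous_UNIV_wedge_form01 homogeneous_UNIV_wedge_form10])
  moreover have "{..<8} = {0, 1, 2, 3} \<union> {4, 5, 6, 7::nat}" by auto
  moreover have "wedge ?X ?Y ({0, 1, 2, 3} \<union> {4, 5, 6, 7})
      = (-1) ^ inv_count {0, 1, 2, 3} {4, 5, 6, 7::nat} * ?X {0, 1, 2, 3} * ?Y {4, 5, 6, 7}"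
    by (rule wedge_monomial_at_value[OF monomial_at_wedge_form10_top monomial_at_wedge_form01_top])
      auto
  moreover have "inv_count {0, 1, 2, 3} {4, 5, 6, 7::nat} = 0"
    by (simp add: inv_count_eq_sum)
  ultimately show ?thesis
    unfolding wedge_form10_top wedge_form01_top by simp
qed

lemma vol4_eq: "vol 4 = (\<lambda>S. if S = {..<8} then 1 else 0)"
proof -
  define D where "D k = fscale \<i> (wedge (dz 4 k) (dzb 4 k))" for k
  have mon_D: "monomial_at {k, k + 4} (D k)" if "k < 4" for k
  proof -
    have "monomial_at {k} (dz 4 k)" "monomial_at {k + 4} (dzb 4 k)"
      using that unfolding monomial_at_def dz_def dzb_def form10_def form01_def
      by (auto simp: card_Suc_eq split: if_splits)
    from monomial_at_wedge[OF this] show ?thesis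
      unfolding D_def monomial_at_def fscale_def by auto
  qed
  have val_D: "D k {k, k + 4} = \<i>" if "k < 4" for k
    using that unfolding D_def fscale_def dz_def dzb_def
    by (simp add: wedge_degree_one_pair[OF homogeneous_UNIV_form10 homogeneous_UNIV_form01]
        form10_singleton form01_singleton) (simp add: form10_def)
  have unit: "wedge (D 3) unit_form = D 3"
    by (rule wedge_unit_form_right) (simp add: D_def fscale_def wedge_infinite)
  have "[0..<4] = [0, 1, 2, 3::nat]" by (simp add: upt_rec)
  then have "vol 4 = wedge (D 0) (wedge (D 1) (wedge (D 2) (wedge (D 3) unit_form)))"
    unfolding vol_def D_def by (simp only: foldr_Cons foldr_Nil o_apply id_apply)
  also have "\<dots> = wedge (D 0) (wedge (D 1) (wedge (D 2) (D 3)))"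
    by (simp only: unit)
  finally have vol: "vol 4 = wedge (D 0) (wedge (D 1) (wedge (D 2) (D 3)))" .
  have mon: "monomial_at {0, 4} (D 0)" "monomial_at {1, 5} (D 1)" "monomial_at {2, 6} (D 2)"
    "monomial_at {3, 7} (D 3)"
    using mon_D[of 0] mon_D[of 1] mon_D[of 2] mon_D[of 3] by simp_all
  have val: "D 0 {0, 4} = \<i>" "D 1 {1, 5} = \<i>" "D 2 {2, 6} = \<i>" "D 3 {3, 7} = \<i>"
    using val_D[of 0] val_D[of 1] val_D[of 2] val_D[of 3] by simp_all
  note mon23 = monomial_at_wedge[OF mon(3,4)]
  note mon123 = monomial_at_wedge[OF mon(2) mon23]
  have "wedge (D 2) (D 3) ({2, 6} \<union> {3, 7}) = 1"
    using mon val by (subst wedge_monomial_at_value) (simp_all add: inv_count_eq_sum)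
  then have "wedge (D 1) (wedge (D 2) (D 3)) ({1, 5} \<union> ({2, 6} \<union> {3, 7})) = \<i>"
    using mon val mon23 by (subst wedge_monomial_at_value) (simp_all add: inv_count_eq_sum)
  then have "wedge (D 0) (wedge (D 1) (wedge (D 2) (D 3))) ({0, 4} \<union> ({1, 5} \<union> ({2, 6} \<union> {3, 7}))) = 1"
    using mon val mon123 by (subst wedge_monomial_at_value) (simp_all add: inv_count_eq_sum)
  moreover note monomial_at_wedge[OF mon(1) mon123]
  moreover have "{0, 4} \<union> ({1, 5} \<union> ({2, 6} \<union> {3, 7})) = {..<8::nat}" by auto
  ultimately show ?thesis
    unfolding vol monomial_at_def by (metis (full_types))
qed

lemma fscale_vol4_eq_iff: "fscale c (vol 4) = fscale d (vol 4) \<longleftrightarrow> c = d"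
proof
  assume "fscale c (vol 4) = fscale d (vol 4)"
  then have "fscale c (vol 4) {..<8} = fscale d (vol 4) {..<8}" by simp
  then show "c = d" by (simp add: fscale_def vol4_eq)
qed simp

lemma lincomb4_components:
  fixes w :: "nat \<Rightarrow> nat \<Rightarrow> complex"
  assumes "\<forall>k<4. (\<Sum>j<4. c j * w j k) = v k"
  shows "v 0 = c 0 * w 0 0 + c 1 * w 1 0 + c 2 * w 2 0 + c 3 * w 3 0"
    "v 1 = c 0 * w 0 1 + c 1 * w 1 1 + c 2 * w 2 1 + c 3 * w 3 1"
    "v 2 = c 0 * w 0 2 + c 1 * w 1 2 + c 2 * w 2 2 + c 3 * w 3 2"
    "v 3 = c 0 * w 0 3 + c 1 * w 1 3 + c 2 * w 2 3 + c 3 * w 3 3"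
  using assms by (auto simp: eval_nat_numeral)

lemma det4_lincomb:
  fixes w :: "nat \<Rightarrow> nat \<Rightarrow> complex"
  assumes "\<forall>k<4. (\<Sum>j<4. c j * w j k) = v k"
  shows "det4 v y z t = (\<Sum>j<4. c j * det4 (w j) y z t)"
    and "det4 x v z t = (\<Sum>j<4. c j * det4 x (w j) z t)"
    and "det4 x y v t = (\<Sum>j<4. c j * det4 x y (w j) t)"
    and "det4 x y z v = (\<Sum>j<4. c j * det4 x y z (w j))"
  unfolding det4_def minor2_def lincomb4_components[OF assms] by (simp add: eval_nat_numeral; algebra)+

lemma det4_repeated_row:
  "det4 x x z t = 0" "det4 x y x t = 0" "det4 x y z x = 0"
  "det4 x y y t = 0" "det4 x y z y = 0" "det4 x y z z = 0"
  unfolding det4_def minor2_def by algebra+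

lemma all_nat_less_4: "(\<forall>a::nat. a < 4 \<longrightarrow> P a) \<longleftrightarrow> P 0 \<and> P 1 \<and> P 2 \<and> P 3"
  by (auto simp: less_Suc_eq eval_nat_numeral)

lemma det4_rows_eq_0:
  fixes w :: "nat \<Rightarrow> nat \<Rightarrow> complex"
  shows "det4 (w 0) (w 1) (w 2) (w 3) = 0 \<Longrightarrow>
    \<forall>a<4. \<forall>b<4. \<forall>c<4. \<forall>d<4. det4 (w a) (w b) (w c) (w d) = 0"
  apply (simp only: all_nat_less_4)
  apply (intro conjI)
  apply (simp_all only: det4_repeated_row simp_thms)
  by (unfold det4_def minor2_def; algebra)+

text \<open>Expanding the standard basis vectors one slot at a time in the rows \<open>w j\<close> shows that
  some \<open>det4\<close> of rows of \<open>w\<close> is nonzero; since \<open>det4\<close> is alternating this forces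
  \<open>det4 (w 0) (w 1) (w 2) (w 3) \<noteq> 0\<close>.\<close>

lemma det4_neq_0_if_spanning:
  fixes w :: "nat \<Rightarrow> nat \<Rightarrow> complex"
  assumes span: "\<And>v. \<exists>c. \<forall>k<4. (\<Sum>j<4. c j * w j k) = v k"
  shows "det4 (w 0) (w 1) (w 2) (w 3) \<noteq> 0"
proof
  assume det0: "det4 (w 0) (w 1) (w 2) (w 3) = 0"
  define e where "e i = (\<lambda>k. if k = i then 1 else 0 :: complex)" for i :: nat
  have nonzero_term: "\<exists>j<4. f j \<noteq> 0" if "(\<Sum>j<4. c j * f j) \<noteq> (0::complex)" for c f :: "nat \<Rightarrow> complex"
    using that by (metis (no_types, lifting) lessThan_iff mult_zero_right sum.neutral)
  have "\<forall>i. \<exists>c. \<forall>k<4. (\<Sum>j<4. c j * w j k) = e i k" using span by blast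
  then obtain c :: "nat \<Rightarrow> nat \<Rightarrow> complex" where c: "\<forall>k<4. (\<Sum>j<4. c i j * w j k) = e i k" for i
    by metis
  have "det4 (e 0) (e 1) (e 2) (e 3) \<noteq> 0"
    by (simp add: det4_def minor2_def e_def)
  then have "(\<Sum>j<4. c 0 j * det4 (w j) (e 1) (e 2) (e 3)) \<noteq> 0"
    by (simp only: det4_lincomb(1)[OF c[of 0]] not_False_eq_True)
  then have "\<exists>j<4. det4 (w j) (e 1) (e 2) (e 3) \<noteq> 0" by (rule nonzero_term)
  then obtain j0 where j0: "j0 < 4" "det4 (w j0) (e 1) (e 2) (e 3) \<noteq> 0" by blast
  have "(\<Sum>j<4. c 1 j * det4 (w j0) (w j) (e 2) (e 3)) \<noteq> 0"
    using j0(2) by (simp only: det4_lincomb(2)[OF c[of 1]] not_False_eq_True)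
  then have "\<exists>j<4. det4 (w j0) (w j) (e 2) (e 3) \<noteq> 0" by (rule nonzero_term)
  then obtain j1 where j1: "j1 < 4" "det4 (w j0) (w j1) (e 2) (e 3) \<noteq> 0" by blast
  have "(\<Sum>j<4. c 2 j * det4 (w j0) (w j1) (w j) (e 3)) \<noteq> 0"
    using j1(2) by (simp only: det4_lincomb(3)[OF c[of 2]] not_False_eq_True)
  then have "\<exists>j<4. det4 (w j0) (w j1) (w j) (e 3) \<noteq> 0" by (rule nonzero_term)
  then obtain j2 where j2: "j2 < 4" "det4 (w j0) (w j1) (w j2) (e 3) \<noteq> 0" by blast
  have "(\<Sum>j<4. c 3 j * det4 (w j0) (w j1) (w j2) (w j)) \<noteq> 0"
    using j2(2) by (simp only: det4_lincomb(4)[OF c[of 3]] not_False_eq_True)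
  then have "\<exists>j<4. det4 (w j0) (w j1) (w j2) (w j) \<noteq> 0" by (rule nonzero_term)
  then obtain j3 where "j3 < 4" "det4 (w j0) (w j1) (w j2) (w j3) \<noteq> 0" by blast
  then show False using det4_rows_eq_0[OF det0] j0 j1 j2 by blast
qed

section \<open>The Hermitian form\<close>

definition alpha_hermitian :: "complex \<Rightarrow> (nat \<Rightarrow> complex) \<Rightarrow> real" where
  "alpha_hermitian a c = (\<Sum>j=1..6. (cmod (c j))\<^sup>2) + 2 * Re (a * c 1 * cnj (c 6))"

lemma sum_1_6: "(\<Sum>j::nat=1..6. f j) = f 1 + f 2 + f 3 + f 4 + f 5 + (f 6 :: 'a :: comm_monoid_add)"
  by (simp add: eval_nat_numeral atLeastAtMostSuc_conv add_ac)

lemma alpha_hermitian_nonneg: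
  assumes plucker: "c 1 * c 6 + c 2 * c 5 + c 3 * c 4 = 0" and "cmod a \<le> 2"
  shows "0 \<le> alpha_hermitian a c"
proof -
  define n where "n j = cmod (c j)" for j
  have am_gm: "2 * (x * y) \<le> x\<^sup>2 + y\<^sup>2" for x y :: real
    using sum_squares_bound[of x y] by (simp add: power2_eq_square mult.assoc)
  have "- (cmod a * (n 1 * n 6)) \<le> Re (a * c 1 * cnj (c 6))"
    using abs_Re_le_cmod[of "a * c 1 * cnj (c 6)"] by (simp add: n_def norm_mult)
  moreover have "cmod a * (n 1 * n 6) \<le> 2 * (n 1 * n 6)"
    using assms(2) by (intro mult_right_mono) (auto simp: n_def)
  moreover have "n 1 * n 6 \<le> n 2 * n 5 + n 3 * n 4"
  proof -
    have "n 1 * n 6 = cmod (c 2 * c 5 + c 3 * c 4)"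
      using plucker unfolding n_def by (metis add.assoc add_eq_0_iff norm_minus_cancel norm_mult)
    also have "\<dots> \<le> n 2 * n 5 + n 3 * n 4"
      unfolding n_def by (metis norm_mult norm_triangle_ineq)
    finally show ?thesis .
  qed
  moreover note am_gm[of "n 1" "n 6"] am_gm[of "n 2" "n 5"] am_gm[of "n 3" "n 4"]
  ultimately show ?thesis
    unfolding alpha_hermitian_def sum_1_6 n_def by linarith
qed

lemma alpha_hermitian_witness_neg:
  assumes a: "2 < cmod a" and "D \<noteq> 0" and u: "u = - cnj a / cmod a"
    and c: "c 1 = u * D" "c 2 = 0" "c 3 = - D" "c 4 = u * D" "c 5 = 0" "c 6 = D"
  shows "alpha_hermitian a c < 0"
proof -
  have a0: "cmod a \<noteq> 0" using a by linarith
  have u1: "cmod u = 1" using a0 by (simp add: u norm_divide)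
  have re: "Re (a * c 1 * cnj (c 6)) = - cmod a * (cmod D)\<^sup>2"
  proof -
    have au: "a * u = - cmod a"
      using a0 by (simp add: u complex_norm_square[symmetric] power2_eq_square)
    have "a * c 1 * cnj (c 6) = (a * u) * (D * cnj D)"
      unfolding c(1,6) by (simp add: ac_simps)
    also have "\<dots> = - complex_of_real (cmod a * (cmod D)\<^sup>2)"
      unfolding au complex_norm_square[symmetric] by simp
    finally show ?thesis by simp
  qed
  have "alpha_hermitian a c = (cmod D)\<^sup>2 * (4 - 2 * cmod a)"
    unfolding alpha_hermitian_def sum_1_6 re unfolding c by (simp add: u1 norm_mult algebra_simps)
  also have "\<dots> < 0" using assms(1,2) by (simp add: mult_pos_neg)
  finally show ?thesis .
qed

definition omega_fst :: "nat \<Rightarrow> nat" where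
  "omega_fst j = (if j \<le> 3 then 0 else if j \<le> 5 then 1 else 2)"

definition omega_snd :: "nat \<Rightarrow> nat" where
  "omega_snd j = (if j \<le> 3 then j else if j = 4 then 2 else 3)"

definition omega_sign :: "nat \<Rightarrow> complex" where
  "omega_sign j = (if j = 5 then -1 else 1)"

lemma Omega_eq:
  "1 \<le> j \<Longrightarrow> Omega w j
   = fscale (omega_sign j) (wedge (form10 4 (w (omega_fst j))) (form10 4 (w (omega_snd j))))"
  unfolding Omega_def omega_fst_def omega_snd_def omega_sign_def Let_def by (auto simp: fscale_1)

lemma OmegaB_eq:
  "1 \<le> j \<Longrightarrow> OmegaB w j
   = fscale (omega_sign j) (wedge (form01 4 (w (omega_fst j))) (form01 4 (w (omega_snd j))))"
  unfolding OmegaB_def omega_fst_def omega_snd_def omega_sign_def Let_def by (auto simp: fscale_1)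

definition omega_coeff ::
  "(nat \<Rightarrow> nat \<Rightarrow> complex) \<Rightarrow> (nat \<Rightarrow> complex) \<Rightarrow> (nat \<Rightarrow> complex) \<Rightarrow> nat \<Rightarrow> complex" where
  "omega_coeff w g1 g2 j = omega_sign j * det4 (w (omega_fst j)) (w (omega_snd j)) g1 g2"

lemma omega_coeff_simps:
  "omega_coeff w g1 g2 1 = det4 (w 0) (w 1) g1 g2" "omega_coeff w g1 g2 2 = det4 (w 0) (w 2) g1 g2"
  "omega_coeff w g1 g2 3 = det4 (w 0) (w 3) g1 g2" "omega_coeff w g1 g2 4 = det4 (w 1) (w 2) g1 g2"
  "omega_coeff w g1 g2 5 = - det4 (w 1) (w 3) g1 g2" "omega_coeff w g1 g2 6 = det4 (w 2) (w 3) g1 g2"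
  by (simp_all add: omega_coeff_def omega_sign_def omega_fst_def omega_snd_def)

lemma omega_coeff_plucker:
  "omega_coeff w g1 g2 1 * omega_coeff w g1 g2 6 + omega_coeff w g1 g2 2 * omega_coeff w g1 g2 5
   + omega_coeff w g1 g2 3 * omega_coeff w g1 g2 4 = 0"
  unfolding omega_coeff_simps det4_def minor2_def by algebra

lemma omega_coeff_witness:
  fixes w :: "nat \<Rightarrow> nat \<Rightarrow> complex" and u :: complex
  defines "g1 \<equiv> \<lambda>k. w 0 k + w 2 k" and "g2 \<equiv> \<lambda>k. w 1 k + u * w 3 k"
    and "D \<equiv> det4 (w 0) (w 1) (w 2) (w 3)"
  shows "omega_coeff w g1 g2 1 = u * D" "omega_coeff w g1 g2 2 = 0" "omega_coeff w g1 g2 3 = - D"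
    "omega_coeff w g1 g2 4 = u * D" "omega_coeff w g1 g2 5 = 0" "omega_coeff w g1 g2 6 = D"
  unfolding omega_coeff_simps g1_def g2_def D_def det4_def minor2_def by algebra+

lemma wedge_Omega_OmegaB_test_form:
  "1 \<le> j \<Longrightarrow> 1 \<le> k \<Longrightarrow>
   wedge (wedge (Omega w j) (OmegaB w k)) (test_form 4 [g1, g2]) {..<8}
   = omega_coeff w g1 g2 j * cnj (omega_coeff w g1 g2 k)"
  unfolding Omega_eq OmegaB_eq omega_coeff_def
  by (simp only: wedge_fscale_left wedge_fscale_right)
    (simp add: fscale_def wedge_decomposable_test_form_top omega_sign_def)

lemma homogeneous_Omega: "1 \<le> j \<Longrightarrow> homogeneous {..<8} 2 (Omega w j)"
  unfolding Omega_eq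
  by (intro homogeneous_fscale homogeneous_wedge[where k=1 and l=1]
      homogeneous_mono[OF homogeneous_form10]) auto

lemma homogeneous_OmegaB: "1 \<le> j \<Longrightarrow> homogeneous {..<8} 2 (OmegaB w j)"
  unfolding OmegaB_eq
  by (intro homogeneous_fscale homogeneous_wedge[where k=1 and l=1]
      homogeneous_mono[OF homogeneous_form01]) auto

lemma alpha_form_unfold: "alpha_form w a =
  fadd (fadd (fadd (wedge (Omega w 1) (OmegaB w 1)) (fadd (wedge (Omega w 2) (OmegaB w 2))
   (fadd (wedge (Omega w 3) (OmegaB w 3)) (fadd (wedge (Omega w 4) (OmegaB w 4))
   (fadd (wedge (Omega w 5) (OmegaB w 5)) (fadd (wedge (Omega w 6) (OmegaB w 6)) (\<lambda>_. 0)))))))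
   (fscale a (wedge (Omega w 1) (OmegaB w 6)))) (fscale (cnj a) (wedge (Omega w 6) (OmegaB w 1)))"
proof -
  have "[1..<7] = [1, 2, 3, 4, 5, 6::nat]" by (simp add: upt_rec)
  then show ?thesis
    unfolding alpha_form_def by (simp only: foldr_Cons foldr_Nil o_apply id_apply)
qed

lemma alpha_form_wedge_test_form:
  "wedge (alpha_form w a) (test_form 4 [g1, g2])
   = fscale (complex_of_real (alpha_hermitian a (omega_coeff w g1 g2))) (vol 4)"
proof
  fix S
  let ?c = "omega_coeff w g1 g2"
  have hom: "homogeneous {..<8} 8 (wedge (alpha_form w a) (test_form 4 [g1, g2]))"
  proof (rule homogeneous_wedge[where k=4 and l=4])
    show "homogeneous {..<8} 4 (alpha_form w a)"
      unfolding alpha_form_unfold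
      by (intro homogeneous_fadd homogeneous_fscale homogeneous_zero
          homogeneous_wedge[OF homogeneous_Omega homogeneous_OmegaB]) auto
    show "homogeneous {..<8} 4 (test_form 4 [g1, g2])"
      unfolding test_form_two
      by (intro homogeneous_wedge[where k=2 and l=2] homogeneous_wedge[where k=1 and l=1]
          homogeneous_mono[OF homogeneous_form10] homogeneous_mono[OF homogeneous_form01]) auto
  qed simp
  have "wedge (alpha_form w a) (test_form 4 [g1, g2]) {..<8}
      = ?c 1 * cnj (?c 1) + ?c 2 * cnj (?c 2) + ?c 3 * cnj (?c 3) + ?c 4 * cnj (?c 4)
        + ?c 5 * cnj (?c 5) + ?c 6 * cnj (?c 6) + (a * ?c 1 * cnj (?c 6) + cnj (a * ?c 1 * cnj (?c 6)))"
    unfolding alpha_form_unfold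
    by (simp only: wedge_fadd_left wedge_fscale_left wedge_zero_left)
      (simp add: fadd_def fscale_def wedge_Omega_OmegaB_test_form algebra_simps)
  also have "\<dots> = complex_of_real (alpha_hermitian a ?c)"
    unfolding alpha_hermitian_def sum_1_6 complex_add_cnj
    by (simp only: complex_norm_square[symmetric] of_real_add of_real_mult of_real_numeral)
  finally show "wedge (alpha_form w a) (test_form 4 [g1, g2]) S
      = fscale (complex_of_real (alpha_hermitian a ?c)) (vol 4) S"
    using homogeneous_top_degree[OF hom] by (auto simp: vol4_eq fscale_def)
qed

lemma all_length_2_iff: "(\<forall>xs. length xs = 2 \<longrightarrow> P xs) \<longleftrightarrow> (\<forall>x y. P [x, y])"
proof
  assume "\<forall>x y. P [x, y]"
  then show "\<forall>xs. length xs = 2 \<longrightarrow> P xs"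
    by (auto simp: length_Suc_conv numeral_2_eq_2)
qed simp

lemma positive_alpha_form_iff:
  "positive_form 4 2 (alpha_form w a) \<longleftrightarrow> (\<forall>g1 g2. 0 \<le> alpha_hermitian a (omega_coeff w g1 g2))"
proof -
  have four_minus_two: "4 - 2 = (2::nat)" by simp
  have "positive_form 4 2 (alpha_form w a) \<longleftrightarrow> (\<forall>g1 g2. \<exists>r\<ge>0.
      wedge (alpha_form w a) (test_form 4 [g1, g2]) = fscale (complex_of_real r) (vol 4))"
    unfolding positive_form_def four_minus_two all_length_2_iff ..
  also have "\<dots> \<longleftrightarrow> (\<forall>g1 g2. 0 \<le> alpha_hermitian a (omega_coeff w g1 g2))"
    by (simp add: alpha_form_wedge_test_form fscale_vol4_eq_iff)
  finally show ?thesis .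
qed

theorem proposition4:
  fixes w :: "nat \<Rightarrow> nat \<Rightarrow> complex" and a :: complex
  assumes indep: "\<And>c. (\<forall>k<4. (\<Sum>j<4. c j * w j k) = 0) \<Longrightarrow> \<forall>j<4. c j = 0"
    and span: "\<And>v. \<exists>c. \<forall>k<4. (\<Sum>j<4. c j * w j k) = v k"
  shows "positive_form 4 2 (alpha_form w a) \<longleftrightarrow> cmod a \<le> 2"
proof
  show "cmod a \<le> 2" if "positive_form 4 2 (alpha_form w a)"
  proof (rule ccontr)
    assume "\<not> cmod a \<le> 2"
    let ?u = "- cnj a / cmod a"
    have "alpha_hermitian a (omega_coeff w (\<lambda>k. w 0 k + w 2 k) (\<lambda>k. w 1 k + ?u * w 3 k)) < 0"
      using \<open>\<not> cmod a \<le> 2\<close> alpha_hermitian_witness_neg[OF _ det4_neq_0_if_spanning[OF span]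
          refl omega_coeff_witness[of w ?u]] by simp
    with that show False unfolding positive_alpha_form_iff by (meson not_le)
  qed
  show "positive_form 4 2 (alpha_form w a)" if "cmod a \<le> 2"
    unfolding positive_alpha_form_iff
    using alpha_hermitian_nonneg[where c = "omega_coeff w _ _", OF omega_coeff_plucker that] by blast
qed

end
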